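(* Let $(G,d)$ be a boundedly compact $p$-uniformly convex metric space with $p=c=2$, $f:G\to\mathbb{R}$ proper, convex and lower semicontinuous, $\lambda>0$, and $\tau\in(0,1/2]$. Then the relaxed prox mapping $T_\tau=(1-\tau)\mathrm{Id}\oplus\tau\,\mathrm{prox}^2_{f,\lambda}$ is $\alpha$-firmly nonexpansive on $G$ with constant $\alpha_\tau=1-\tau$, i.e. $d(T_\tau x,T_\tau y)^2\le d(x,y)^2-\frac{\tau}{1-\tau}\psi^{(2,2)}(x,y,T_\tau x,T_\tau y)$ for all $x,y\in G$.
   Context: $(G,d)$ uniquely geodesic with $d(z,(1-\tau)x\oplus\tau y)^2\le(1-\tau)d(z,x)^2+\tau d(z,y)^2-\tau(1-\tau)d(x,y)^2$ for all $\tau\in[0,1]$, $x,y,z$, where $(1-\tau)x\oplus\tau y$ is the point on the geodesic from $x$ to $y$ at distance $\tau d(x,y)$ from $x$; $T_\tau(x)=(1-\tau)x\oplus\tau\,\mathrm{prox}^2_{f,\lambda}(x)$. $f$ convex: $f((1-\tau)x\oplus\tau y)\le(1-\tau)f(x)+\tau f(y)$. $\mathrm{prox}^2_{f,\lambda}(x)=\operatorname{argmin}_y\{f(y)+\frac1{2\lambda}d(y,x)^2\}$. $\psi^{(2,2)}(x,y,u,v)=d(x,u)^2+d(y,v)^2+d(u,v)^2+d(x,y)^2-d(y,u)^2-d(x,v)^2$. *)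

theory Defs
  imports "HOL-Analysis.Analysis"
begin

definition geodesic_path :: "'a::metric_space \<Rightarrow> 'a \<Rightarrow> (real \<Rightarrow> 'a) \<Rightarrow> bool" where
  "geodesic_path x y \<gamma> \<longleftrightarrow> \<gamma> 0 = x \<and> \<gamma> 1 = y \<and>
     (\<forall>s\<in>{0..1}. \<forall>t\<in>{0..1}. dist (\<gamma> s) (\<gamma> t) = \<bar>s - t\<bar> * dist x y)"

definition uniquely_geodesic :: "'a::metric_space itself \<Rightarrow> bool" where
  "uniquely_geodesic _ \<longleftrightarrow> (\<forall>x y::'a. (\<exists>\<gamma>. geodesic_path x y \<gamma>) \<and>
     (\<forall>\<gamma> \<delta>. geodesic_path x y \<gamma> \<and> geodesic_path x y \<delta> \<longrightarrow> (\<forall>t\<in>{0..1}. \<gamma> t = \<delta> t)))"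

text \<open>geod x y t = (1-t) x \<oplus> t y: the point on the geodesic from x to y at distance t d(x,y) from x.\<close>
definition geod :: "'a::metric_space \<Rightarrow> 'a \<Rightarrow> real \<Rightarrow> 'a" where
  "geod x y t = (THE z. \<exists>\<gamma>. geodesic_path x y \<gamma> \<and> \<gamma> t = z)"

definition boundedly_compact :: "'a::metric_space itself \<Rightarrow> bool" where
  "boundedly_compact _ \<longleftrightarrow> (\<forall>S::'a set. bounded S \<and> closed S \<longrightarrow> compact S)"

definition two_uniformly_convex :: "'a::metric_space itself \<Rightarrow> bool" where
  "two_uniformly_convex _ \<longleftrightarrow> (\<forall>x y z::'a. \<forall>t\<in>{0..1}.
     (dist z (geod x y t))\<^sup>2 \<le> (1 - t) * (dist z x)\<^sup>2 + t * (dist z y)\<^sup>2 - t * (1 - t) * (dist x y)\<^sup>2)"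

definition geod_convex_fun :: "('a::metric_space \<Rightarrow> real) \<Rightarrow> bool" where
  "geod_convex_fun f \<longleftrightarrow> (\<forall>x y. \<forall>t\<in>{0..1}. f (geod x y t) \<le> (1 - t) * f x + t * f y)"

definition lsc :: "('a::topological_space \<Rightarrow> real) \<Rightarrow> bool" where
  "lsc f \<longleftrightarrow> (\<forall>c. closed {x. f x \<le> c})"

definition prox2 :: "('a::metric_space \<Rightarrow> real) \<Rightarrow> real \<Rightarrow> 'a \<Rightarrow> 'a" where
  "prox2 f lam x = (THE y. \<forall>z. f y + (dist y x)\<^sup>2 / (2 * lam) \<le> f z + (dist z x)\<^sup>2 / (2 * lam))"

definition relaxed_prox :: "('a::metric_space \<Rightarrow> real) \<Rightarrow> real \<Rightarrow> real \<Rightarrow> 'a \<Rightarrow> 'a" where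
  "relaxed_prox f lam \<tau> x = geod x (prox2 f lam x) \<tau>"

definition psi22 :: "'a::metric_space \<Rightarrow> 'a \<Rightarrow> 'a \<Rightarrow> 'a \<Rightarrow> real" where
  "psi22 x y u v = (dist x u)\<^sup>2 + (dist y v)\<^sup>2 + (dist u v)\<^sup>2 + (dist x y)\<^sup>2
      - (dist y u)\<^sup>2 - (dist x v)\<^sup>2"

end

theory Submission
  imports Defs
begin

(* If p minimises F = f + d(.,x)^2/(2 lam), comparing its value with the values along the geodesic
   from p to any z and using 2-uniform convexity gives the quadratic growth
   2 lam F(p) + d(p,z)^2 <= 2 lam F(z).  Hence the minimiser is unique, and adding the growth
   inequalities for p = prox x and q = prox y gives firm nonexpansiveness
   d(x,p)^2 + d(y,q)^2 + 2 d(p,q)^2 <= d(x,q)^2 + d(y,p)^2.  Existence of the minimiser uses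
   bounded compactness: a convex f decays at most linearly away from x.
   For the relaxed points u = T x and v = T y, note that u lies on the geodesic from x to
   u' = tau x (+) (1-tau) p, at parameter tau/(1-tau).  Apply 2-uniform convexity at u, v, u'
   and v', together with psi >= 0 (the quadrilateral inequality) for three quadrilaterals, and
   combine these with firm nonexpansiveness.  The combination is linear, and all its
   coefficients are nonnegative for tau <= 1/2. *)

lemma geod_eq_geodesic_path:
  assumes "uniquely_geodesic TYPE('a::metric_space)" and "geodesic_path (x::'a) y \<gamma>"
    and "t \<in> {0..1}"
  shows "geod x y t = \<gamma> t"
  unfolding geod_def
proof (rule the_equality)
  show "\<exists>\<gamma>'. geodesic_path x y \<gamma>' \<and> \<gamma>' t = \<gamma> t"
    using assms(2) by blast
next
  fix z assume "\<exists>\<delta>. geodesic_path x y \<delta> \<and> \<delta> t = z"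
  then show "z = \<gamma> t"
    using assms unfolding uniquely_geodesic_def by blast
qed

lemma dist_geod_geod:
  assumes "uniquely_geodesic TYPE('a::metric_space)" and "s \<in> {0..1}" "t \<in> {0..1}"
  shows "dist (geod (x::'a) y s) (geod x y t) = \<bar>s - t\<bar> * dist x y"
proof -
  obtain \<gamma> where \<gamma>: "geodesic_path x y \<gamma>"
    using assms(1) unfolding uniquely_geodesic_def by blast
  then show ?thesis
    using geod_eq_geodesic_path[OF assms(1) \<gamma> assms(2)] geod_eq_geodesic_path[OF assms(1) \<gamma> assms(3)]
      assms(2,3) unfolding geodesic_path_def by simp
qed

lemma geod_start:
  assumes "uniquely_geodesic TYPE('a::metric_space)"
  shows "geod (x::'a) y 0 = x"
proof -
  obtain \<gamma> where \<gamma>: "geodesic_path x y \<gamma>"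
    using assms unfolding uniquely_geodesic_def by blast
  then show ?thesis
    using geod_eq_geodesic_path[OF assms \<gamma>, of 0] unfolding geodesic_path_def by simp
qed

lemma geod_end:
  assumes "uniquely_geodesic TYPE('a::metric_space)"
  shows "geod (x::'a) y 1 = y"
proof -
  obtain \<gamma> where \<gamma>: "geodesic_path x y \<gamma>"
    using assms unfolding uniquely_geodesic_def by blast
  then show ?thesis
    using geod_eq_geodesic_path[OF assms \<gamma>, of 1] unfolding geodesic_path_def by simp
qed

lemma dist_start_geod:
  assumes "uniquely_geodesic TYPE('a::metric_space)" and "s \<in> {0..1}"
  shows "dist (x::'a) (geod x y s) = s * dist x y"
  using dist_geod_geod[OF assms(1) _ assms(2), of 0 x y] assms by (simp add: geod_start)

lemma dist_geod_end:
  assumes "uniquely_geodesic TYPE('a::metric_space)" and "s \<in> {0..1}"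
  shows "dist (geod (x::'a) y s) y = (1 - s) * dist x y"
  using dist_geod_geod[OF assms(1) assms(2), of 1 x y] assms by (simp add: geod_end)

lemma geod_geod_start:
  assumes "uniquely_geodesic TYPE('a::metric_space)" and "r \<in> {0..1}" "s \<in> {0..1}"
  shows "geod (x::'a) (geod x y s) r = geod x y (r * s)"
proof -
  have "geodesic_path x (geod x y s) (\<lambda>r. geod x y (r * s))"
    unfolding geodesic_path_def
  proof (intro conjI ballI)
    fix a b :: real assume "a \<in> {0..1}" "b \<in> {0..1}"
    then have "a * s \<in> {0..1}" "b * s \<in> {0..1}"
      using assms(3) by (auto intro: mult_le_one)
    then show "dist (geod x y (a * s)) (geod x y (b * s)) = \<bar>a - b\<bar> * dist x (geod x y s)"
      using assms by (simp add: dist_geod_geod dist_start_geod abs_mult left_diff_distrib[symmetric])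
  qed (use assms in \<open>simp_all add: geod_start\<close>)
  then show ?thesis
    using geod_eq_geodesic_path[OF assms(1) _ assms(2)] by simp
qed

lemma two_uniformly_convexD:
  assumes "two_uniformly_convex TYPE('a::metric_space)" and "t \<in> {0..1}"
  shows "(dist (z::'a) (geod x y t))\<^sup>2
    \<le> (1 - t) * (dist z x)\<^sup>2 + t * (dist z y)\<^sup>2 - t * (1 - t) * (dist x y)\<^sup>2"
  using assms unfolding two_uniformly_convex_def by blast

lemma two_uniformly_convex_subsegment:
  assumes "uniquely_geodesic TYPE('a::metric_space)" and "two_uniformly_convex TYPE('a)"
    and "0 \<le> s" "s \<le> r" "r \<le> 1"
  shows "r * (dist (z::'a) (geod x y s))\<^sup>2
    \<le> (r - s) * (dist z x)\<^sup>2 + s * (dist z (geod x y r))\<^sup>2 - s * (r - s) * r * (dist x y)\<^sup>2"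
proof (cases "r = 0")
  case True
  then show ?thesis using assms by simp
next
  case False
  define t where "t = s / r"
  have r: "0 < r" "r \<in> {0..1}" and t: "t \<in> {0..1}"
    using assms False unfolding t_def by auto
  have "geod x (geod x y r) t = geod x y s"
    using geod_geod_start[OF assms(1) t r(2)] r unfolding t_def by simp
  then have "r * (dist z (geod x y s))\<^sup>2 \<le> r * ((1 - t) * (dist z x)\<^sup>2
      + t * (dist z (geod x y r))\<^sup>2 - t * (1 - t) * (r * dist x y)\<^sup>2)"
    using two_uniformly_convexD[OF assms(2) t, of z x "geod x y r"] r
    by (simp add: dist_start_geod[OF assms(1)])
  also have "\<dots> = (r - s) * (dist z x)\<^sup>2 + s * (dist z (geod x y r))\<^sup>2 - s * (r - s) * r * (dist x y)\<^sup>2"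
    using r(1) unfolding t_def by (simp add: field_simps power2_eq_square)
  finally show ?thesis .
qed

lemma psi22_nonneg:
  assumes "two_uniformly_convex TYPE('a::metric_space)"
  shows "0 \<le> psi22 (x::'a) y u v"
proof -
  \<comment> \<open>the quadrilateral inequality, proved through the midpoint of the diagonal from x to v\<close>
  define m where "m = geod x v (1/2)"
  have "(dist y u)\<^sup>2 \<le> (dist y m + dist u m)\<^sup>2"
    by (simp add: dist_triangle2 power_mono)
  also have "\<dots> \<le> 2 * (dist y m)\<^sup>2 + 2 * (dist u m)\<^sup>2"
    using sum_squares_bound[of "dist y m" "dist u m"] unfolding power2_sum by linarith
  finally have "(dist y u)\<^sup>2 \<le> 2 * (dist y m)\<^sup>2 + 2 * (dist u m)\<^sup>2" .
  moreover have "(dist y m)\<^sup>2 \<le> (dist x y)\<^sup>2 / 2 + (dist y v)\<^sup>2 / 2 - (dist x v)\<^sup>2 / 4"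
    and "(dist u m)\<^sup>2 \<le> (dist x u)\<^sup>2 / 2 + (dist u v)\<^sup>2 / 2 - (dist x v)\<^sup>2 / 4"
    using two_uniformly_convexD[OF assms, of "1/2" y x v] two_uniformly_convexD[OF assms, of "1/2" u x v]
    unfolding m_def by (simp_all add: dist_commute power2_eq_square)
  ultimately show ?thesis
    unfolding psi22_def by linarith
qed

definition prox_objective :: "('a::metric_space \<Rightarrow> real) \<Rightarrow> real \<Rightarrow> 'a \<Rightarrow> 'a \<Rightarrow> real" where
  "prox_objective f lam x z = f z + (dist z x)\<^sup>2 / (2 * lam)"

lemma prox2_eq_The_prox_objective:
  "prox2 f lam x = (THE p. \<forall>z. prox_objective f lam x p \<le> prox_objective f lam x z)"
  unfolding prox2_def prox_objective_def ..

lemma prox_objective_scaled: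
  assumes "lam \<noteq> 0"
  shows "2 * lam * prox_objective f lam x z = 2 * lam * f z + (dist x z)\<^sup>2"
  using assms unfolding prox_objective_def by (simp add: dist_commute field_simps)

lemma lsc_add_continuous:
  fixes f g :: "'a::topological_space \<Rightarrow> real"
  assumes "lsc f" and "continuous_on UNIV g"
  shows "lsc (\<lambda>z. f z + g z)"
  unfolding lsc_def
proof
  fix c
  have "{z. c < f z + g z} = (\<Union>r. {z. r < f z} \<inter> {z. c - r < g z})"
  proof (intro equalityI subsetI)
    fix z assume "z \<in> {z. c < f z + g z}"
    then show "z \<in> (\<Union>r. {z. r < f z} \<inter> {z. c - r < g z})"
      by (intro UN_I[of "(f z + c - g z) / 2"]) (auto simp: field_simps)
  qed auto
  moreover have "open {z. r < f z}" for r
  proof -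
    have "{z. r < f z} = - {z. f z \<le> r}" by auto
    then show ?thesis using assms(1) unfolding lsc_def by auto
  qed
  moreover have "open {z. c - r < g z}" for r
    using open_Collect_less[OF continuous_on_const assms(2)] .
  ultimately have "open {z. c < f z + g z}"
    by (simp add: open_Int open_UN)
  moreover have "- {z. f z + g z \<le> c} = {z. c < f z + g z}"
    by auto
  ultimately show "closed {z. f z + g z \<le> c}"
    by (simp add: closed_def)
qed

lemma lsc_compact_attains_min:
  fixes F :: "'a::topological_space \<Rightarrow> real"
  assumes "lsc F" and "compact K" and "K \<noteq> {}"
  shows "\<exists>p\<in>K. \<forall>z\<in>K. F p \<le> F z"
proof (rule ccontr)
  assume "\<not> ?thesis"
  then have cover: "K \<subseteq> (\<Union>z\<in>K. {w. F z < F w})"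
    by (auto simp: not_le)
  have "open {w. F z < F w}" for z
  proof -
    have "{w. F z < F w} = - {w. F w \<le> F z}" by auto
    then show ?thesis using assms(1) unfolding lsc_def by auto
  qed
  then obtain D where D: "D \<subseteq> K" "finite D" "K \<subseteq> (\<Union>z\<in>D. {w. F z < F w})"
    by (rule compactE_image[OF assms(2) _ cover])
  with assms(3) have "Min (F ` D) \<in> F ` D"
    by (intro Min_in) auto
  then obtain z0 where z0: "z0 \<in> D" "F z0 = Min (F ` D)"
    by auto
  with D obtain z where "z \<in> D" "F z < F z0"
    by blast
  moreover have "F z0 \<le> F z"
    using z0(2) Min_le[OF finite_imageI[OF D(2)] imageI[OF \<open>z \<in> D\<close>]] by simp
  ultimately show False
    by simp
qed

lemma lsc_prox_objective:
  assumes "lsc f"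
  shows "lsc (prox_objective f lam x)"
  unfolding prox_objective_def divide_inverse
  by (rule lsc_add_continuous[OF assms]) (intro continuous_intros)

lemma prox_objective_quadratic_growth:
  assumes CN: "two_uniformly_convex TYPE('a::metric_space)" and cvx: "geod_convex_fun f"
    and "0 < lam" and minimal: "\<And>w. prox_objective f lam x p \<le> prox_objective f lam x w"
  shows "2 * lam * prox_objective f lam x p + (dist p z)\<^sup>2 \<le> 2 * lam * prox_objective f lam x (z::'a)"
proof -
  note scaled = prox_objective_scaled[OF less_imp_neq[OF \<open>0 < lam\<close>, symmetric]]
  define A B D where "A = 2 * lam * prox_objective f lam x p"
    and "B = 2 * lam * prox_objective f lam x z" and "D = (dist p z)\<^sup>2"
  have "A + D \<le> B + t * D" if "0 < t" "t \<le> 1" for t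
  proof -
    define w where "w = geod p z t"
    have t: "t \<in> {0..1}" using that by simp
    have "A \<le> 2 * lam * prox_objective f lam x w"
      unfolding A_def using minimal \<open>0 < lam\<close> by simp
    also have "\<dots> = 2 * lam * f w + (dist x w)\<^sup>2"
      by (rule scaled)
    also have "\<dots> \<le> 2 * lam * ((1 - t) * f p + t * f z)
        + ((1 - t) * (dist x p)\<^sup>2 + t * (dist x z)\<^sup>2 - t * (1 - t) * D)"
    proof (rule add_mono)
      show "2 * lam * f w \<le> 2 * lam * ((1 - t) * f p + t * f z)"
        using cvx t \<open>0 < lam\<close> unfolding geod_convex_fun_def w_def by simp
      show "(dist x w)\<^sup>2 \<le> (1 - t) * (dist x p)\<^sup>2 + t * (dist x z)\<^sup>2 - t * (1 - t) * D"
        unfolding w_def D_def by (rule two_uniformly_convexD[OF CN t])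
    qed
    also have "\<dots> = (1 - t) * A + t * B - t * (1 - t) * D"
      unfolding A_def B_def scaled by (simp add: algebra_simps)
    finally have "t * (A + D) \<le> t * (B + t * D)"
      by (simp add: algebra_simps)
    then show ?thesis using that by simp
  qed
  then have "eventually (\<lambda>t. A + D \<le> B + t * D) (at_right 0)"
    unfolding eventually_at_right_field by (intro exI[of _ 1]) auto
  moreover have "((\<lambda>t. B + t * D) \<longlongrightarrow> B) (at_right 0)"
    by (auto intro!: tendsto_eq_intros)
  ultimately have "A + D \<le> B"
    using tendsto_lowerbound trivial_limit_at_right_real by blast
  then show ?thesis
    unfolding A_def B_def D_def .
qed

lemma geod_convex_sphere_lower_bound:
  assumes UG: "uniquely_geodesic TYPE('a::metric_space)" and cvx: "geod_convex_fun f"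
    and sphere: "\<And>w. dist x w = 1 \<Longrightarrow> m \<le> f w" and "1 \<le> dist x (z::'a)"
  shows "f x - (f x - m) * dist x z \<le> f z"
proof -
  define r where "r = dist x z"
  define t where "t = 1 / r"
  have r: "1 \<le> r"
    using assms(4) unfolding r_def .
  then have t: "t \<in> {0..1}" and rt: "r * t = 1"
    unfolding t_def by auto
  have "dist x (geod x z t) = 1"
    using dist_start_geod[OF UG t] rt unfolding r_def by (simp add: mult.commute)
  moreover have "f (geod x z t) \<le> (1 - t) * f x + t * f z"
    using cvx t unfolding geod_convex_fun_def by blast
  ultimately have "m \<le> (1 - t) * f x + t * f z"
    using sphere by (meson order_trans)
  then have "r * m \<le> r * ((1 - t) * f x + t * f z)"
    using r by simp
  also have "\<dots> = r * f x - (r * t) * f x + (r * t) * f z"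
    by (simp add: algebra_simps)
  finally have "r * m \<le> r * f x - f x + f z"
    unfolding rt by simp
  moreover have "(f x - m) * r = r * f x - r * m"
    by (simp add: algebra_simps)
  ultimately show ?thesis
    unfolding r_def[symmetric] by linarith
qed

lemma prox_objective_has_min:
  assumes UG: "uniquely_geodesic TYPE('a::metric_space)" and BC: "boundedly_compact TYPE('a)"
    and cvx: "geod_convex_fun f" and "lsc f" and "0 < lam"
  shows "\<exists>p. \<forall>z. prox_objective f lam x p \<le> prox_objective f lam x (z::'a)"
proof -
  have compact_cball: "compact (cball x r)" for r
    using BC unfolding boundedly_compact_def by auto
  obtain w0 where w0: "\<forall>w\<in>cball x 1. f w0 \<le> f w"
    using lsc_compact_attains_min[OF \<open>lsc f\<close> compact_cball, of 1] by fastforce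
  define L where "L = f x - f w0"
  have "0 \<le> L"
    using w0 unfolding L_def by simp
  have far: "f x - L * dist x z \<le> f z" if "1 \<le> dist x z" for z
    using geod_convex_sphere_lower_bound[OF UG cvx _ that, of "f w0"] w0 unfolding L_def by simp
  \<comment> \<open>outside cball x R the quadratic term beats the linear decay, so the objective exceeds its value at x\<close>
  define R where "R = 1 + 2 * lam * L"
  have "1 \<le> R"
    using \<open>0 < lam\<close> \<open>0 \<le> L\<close> unfolding R_def by simp
  then obtain p where p: "\<forall>z\<in>cball x R. prox_objective f lam x p \<le> prox_objective f lam x z"
    using lsc_compact_attains_min[OF lsc_prox_objective[OF \<open>lsc f\<close>] compact_cball, of R] by fastforce
  have "prox_objective f lam x p \<le> prox_objective f lam x z" for z
  proof (cases "z \<in> cball x R")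
    case False
    define r where "r = dist x z"
    have "R < r" "1 \<le> r"
      using False \<open>1 \<le> R\<close> unfolding r_def by auto
    have "r * (2 * lam * L) < r * r"
      using \<open>R < r\<close> \<open>1 \<le> r\<close> unfolding R_def by (intro mult_strict_left_mono) auto
    then have "L * r < r\<^sup>2 / (2 * lam)"
      using \<open>0 < lam\<close> by (simp add: field_simps power2_eq_square)
    then have "prox_objective f lam x x < prox_objective f lam x z"
      using far[OF \<open>1 \<le> r\<close>[unfolded r_def]] unfolding prox_objective_def r_def by (simp add: dist_commute)
    moreover have "prox_objective f lam x p \<le> prox_objective f lam x x"
      using p \<open>1 \<le> R\<close> by simp
    ultimately show ?thesis by simp
  qed (use p in simp)
  then show ?thesis by blast
qed

lemma prox2_minimizes:
  assumes "uniquely_geodesic TYPE('a::metric_space)" and "two_uniformly_convex TYPE('a)"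
    and "boundedly_compact TYPE('a)" and "geod_convex_fun f" and "lsc f" and "0 < lam"
  shows "prox_objective f lam x (prox2 f lam x) \<le> prox_objective f lam x (z::'a)"
proof -
  obtain p where p: "\<forall>z. prox_objective f lam x p \<le> prox_objective f lam x z"
    using prox_objective_has_min[OF assms(1,3-6)] by blast
  have "prox2 f lam x = p"
    unfolding prox2_eq_The_prox_objective
  proof (rule the_equality)
    fix p' assume "\<forall>z. prox_objective f lam x p' \<le> prox_objective f lam x z"
    then have "prox_objective f lam x p' = prox_objective f lam x p"
      using p by (simp add: order_antisym)
    then show "p' = p"
      using prox_objective_quadratic_growth[OF assms(2,4,6), of x p' p] p by simp
  qed (use p in blast)
  then show ?thesis using p by simp
qed

lemma prox2_firmly_nonexpansive:
  assumes "uniquely_geodesic TYPE('a::metric_space)" and "two_uniformly_convex TYPE('a)"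
    and "boundedly_compact TYPE('a)" and "geod_convex_fun f" and "lsc f" and "0 < lam"
  shows "(dist (x::'a) (prox2 f lam x))\<^sup>2 + (dist y (prox2 f lam y))\<^sup>2 + 2 * (dist (prox2 f lam x) (prox2 f lam y))\<^sup>2
    \<le> (dist x (prox2 f lam y))\<^sup>2 + (dist y (prox2 f lam x))\<^sup>2"
proof -
  note scaled = prox_objective_scaled[OF less_imp_neq[OF \<open>0 < lam\<close>, symmetric]]
  have "2 * lam * f (prox2 f lam x) + (dist x (prox2 f lam x))\<^sup>2 + (dist (prox2 f lam x) (prox2 f lam y))\<^sup>2
      \<le> 2 * lam * f (prox2 f lam y) + (dist x (prox2 f lam y))\<^sup>2"
    using prox_objective_quadratic_growth[OF assms(2,4,6) prox2_minimizes[OF assms], of x "prox2 f lam y"]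
    unfolding scaled .
  moreover have "2 * lam * f (prox2 f lam y) + (dist y (prox2 f lam y))\<^sup>2 + (dist (prox2 f lam x) (prox2 f lam y))\<^sup>2
      \<le> 2 * lam * f (prox2 f lam x) + (dist y (prox2 f lam x))\<^sup>2"
    using prox_objective_quadratic_growth[OF assms(2,4,6) prox2_minimizes[OF assms], of y "prox2 f lam x"]
    unfolding scaled dist_commute[of "prox2 f lam y" "prox2 f lam x"] .
  ultimately show ?thesis
    by linarith
qed

lemma relaxation_linear_combination:
  fixes \<tau> a b c e X Y g h k m1 m2 n1 n2 :: real
  assumes "0 \<le> \<tau>" and "\<tau> \<le> 1/2"
    and C1: "(1-\<tau>)*k \<le> (1-2*\<tau>)*h + \<tau>*m1 - \<tau>*(1-2*\<tau>)*(1-\<tau>)*X"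
    and C1': "(1-\<tau>)*k \<le> (1-2*\<tau>)*g + \<tau>*m2 - \<tau>*(1-2*\<tau>)*(1-\<tau>)*Y"
    and C2: "n1 \<le> \<tau>*b + (1-\<tau>)*e - \<tau>*(1-\<tau>)*X"
    and C2': "n2 \<le> \<tau>*c + (1-\<tau>)*e - \<tau>*(1-\<tau>)*Y"
    and FN: "X + Y + 2*e \<le> b + c"
    and P: "0 \<le> \<tau>\<^sup>2*X + \<tau>\<^sup>2*Y + k + a - g - h"
    and Q: "0 \<le> (1-\<tau>)\<^sup>2*X + n1 + (1-\<tau>)\<^sup>2*Y + h - b - m1"
    and Q': "0 \<le> (1-\<tau>)\<^sup>2*Y + n2 + (1-\<tau>)\<^sup>2*X + g - c - m2"
  shows "(1-\<tau>)*k \<le> (1-\<tau>)*a - \<tau>*(\<tau>\<^sup>2*X + \<tau>\<^sup>2*Y + k + a - g - h)"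
proof -
  define G1 where "G1 = (1-2*\<tau>)*h + \<tau>*m1 - \<tau>*(1-2*\<tau>)*(1-\<tau>)*X - (1-\<tau>)*k"
  define G1' where "G1' = (1-2*\<tau>)*g + \<tau>*m2 - \<tau>*(1-2*\<tau>)*(1-\<tau>)*Y - (1-\<tau>)*k"
  define G2 where "G2 = \<tau>*b + (1-\<tau>)*e - \<tau>*(1-\<tau>)*X - n1"
  define G2' where "G2' = \<tau>*c + (1-\<tau>)*e - \<tau>*(1-\<tau>)*Y - n2"
  define F where "F = b + c - X - Y - 2*e"
  define P' where "P' = \<tau>\<^sup>2*X + \<tau>\<^sup>2*Y + k + a - g - h"
  define Q1 where "Q1 = (1-\<tau>)\<^sup>2*X + n1 + (1-\<tau>)\<^sup>2*Y + h - b - m1"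
  define Q2 where "Q2 = (1-\<tau>)\<^sup>2*Y + n2 + (1-\<tau>)\<^sup>2*X + g - c - m2"
  have "(1-\<tau>)*a - \<tau>*P' - (1-\<tau>)*k
      = G1 + G1' + \<tau>*(G2 + G2') + \<tau>*(1-\<tau>)*F + (1-2*\<tau>)*P' + \<tau>*(Q1 + Q2)"
    unfolding G1_def G1'_def G2_def G2'_def F_def P'_def Q1_def Q2_def
    by (simp add: algebra_simps power2_eq_square)
  moreover have "0 \<le> G1 + G1' + \<tau>*(G2 + G2') + \<tau>*(1-\<tau>)*F + (1-2*\<tau>)*P' + \<tau>*(Q1 + Q2)"
    unfolding G1_def G1'_def G2_def G2'_def F_def P'_def Q1_def Q2_def
    using assms by (intro add_nonneg_nonneg mult_nonneg_nonneg) auto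
  ultimately show ?thesis
    unfolding P'_def by linarith
qed

lemma relaxation_alpha_firmly_nonexpansive:
  assumes UG: "uniquely_geodesic TYPE('a::metric_space)" and CN: "two_uniformly_convex TYPE('a)"
    and "0 \<le> \<tau>" and "\<tau> \<le> 1/2"
    and FN: "(dist x p)\<^sup>2 + (dist y q)\<^sup>2 + 2 * (dist p q)\<^sup>2 \<le> (dist x q)\<^sup>2 + (dist y (p::'a))\<^sup>2"
  shows "(1 - \<tau>) * (dist (geod x p \<tau>) (geod y q \<tau>))\<^sup>2
    \<le> (1 - \<tau>) * (dist x y)\<^sup>2 - \<tau> * psi22 x y (geod x p \<tau>) (geod y q \<tau>)"
proof -
  define u v u' v' where "u = geod x p \<tau>" and "v = geod y q \<tau>"
    and "u' = geod x p (1 - \<tau>)" and "v' = geod y q (1 - \<tau>)"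
  have \<tau>: "\<tau> \<in> {0..1}" "1 - \<tau> \<in> {0..1}" and "1 - \<tau> - \<tau> = 1 - 2 * \<tau>"
    using assms(3,4) by auto
  have d: "dist x u = \<tau> * dist x p" "dist y v = \<tau> * dist y q"
    "dist x u' = (1 - \<tau>) * dist x p" "dist y v' = (1 - \<tau>) * dist y q"
    "dist u p = (1 - \<tau>) * dist x p" "dist v q = (1 - \<tau>) * dist y q"
    unfolding u_def v_def u'_def v'_def using \<tau>
    by (simp_all add: dist_start_geod[OF UG] dist_geod_end[OF UG])
  have C1: "(1-\<tau>)*(dist u v)\<^sup>2 \<le> (1-2*\<tau>)*(dist x v)\<^sup>2 + \<tau>*(dist u' v)\<^sup>2 - \<tau>*(1-2*\<tau>)*(1-\<tau>)*(dist x p)\<^sup>2"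
    using two_uniformly_convex_subsegment[OF UG CN \<open>0 \<le> \<tau>\<close>, of "1 - \<tau>" v x p] assms(3,4)
    unfolding u_def u'_def \<open>1 - \<tau> - \<tau> = 1 - 2 * \<tau>\<close> by (simp add: dist_commute)
  have C1': "(1-\<tau>)*(dist u v)\<^sup>2 \<le> (1-2*\<tau>)*(dist y u)\<^sup>2 + \<tau>*(dist u v')\<^sup>2 - \<tau>*(1-2*\<tau>)*(1-\<tau>)*(dist y q)\<^sup>2"
    using two_uniformly_convex_subsegment[OF UG CN \<open>0 \<le> \<tau>\<close>, of "1 - \<tau>" u y q] assms(3,4)
    unfolding v_def v'_def \<open>1 - \<tau> - \<tau> = 1 - 2 * \<tau>\<close> by (simp add: dist_commute)
  have C2: "(dist q u')\<^sup>2 \<le> \<tau>*(dist x q)\<^sup>2 + (1-\<tau>)*(dist p q)\<^sup>2 - \<tau>*(1-\<tau>)*(dist x p)\<^sup>2"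
    using two_uniformly_convexD[OF CN \<tau>(2), of q x p] unfolding u'_def by (simp add: dist_commute algebra_simps)
  have C2': "(dist p v')\<^sup>2 \<le> \<tau>*(dist y p)\<^sup>2 + (1-\<tau>)*(dist p q)\<^sup>2 - \<tau>*(1-\<tau>)*(dist y q)\<^sup>2"
    using two_uniformly_convexD[OF CN \<tau>(2), of p y q] unfolding v'_def by (simp add: dist_commute algebra_simps)
  have P: "0 \<le> \<tau>\<^sup>2*(dist x p)\<^sup>2 + \<tau>\<^sup>2*(dist y q)\<^sup>2 + (dist u v)\<^sup>2 + (dist x y)\<^sup>2 - (dist y u)\<^sup>2 - (dist x v)\<^sup>2"
    using psi22_nonneg[OF CN, of x y u v] d unfolding psi22_def by (simp add: power_mult_distrib)
  have Q: "0 \<le> (1-\<tau>)\<^sup>2*(dist x p)\<^sup>2 + (dist q u')\<^sup>2 + (1-\<tau>)\<^sup>2*(dist y q)\<^sup>2 + (dist x v)\<^sup>2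
      - (dist x q)\<^sup>2 - (dist u' v)\<^sup>2"
    using psi22_nonneg[OF CN, of x v u' q] d unfolding psi22_def by (simp add: dist_commute power_mult_distrib)
  have Q': "0 \<le> (1-\<tau>)\<^sup>2*(dist y q)\<^sup>2 + (dist p v')\<^sup>2 + (1-\<tau>)\<^sup>2*(dist x p)\<^sup>2 + (dist y u)\<^sup>2
      - (dist y p)\<^sup>2 - (dist u v')\<^sup>2"
    using psi22_nonneg[OF CN, of y u v' p] d unfolding psi22_def by (simp add: dist_commute power_mult_distrib)
  have "psi22 x y u v = \<tau>\<^sup>2*(dist x p)\<^sup>2 + \<tau>\<^sup>2*(dist y q)\<^sup>2 + (dist u v)\<^sup>2 + (dist x y)\<^sup>2 - (dist y u)\<^sup>2 - (dist x v)\<^sup>2"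
    unfolding psi22_def d by (simp add: power_mult_distrib)
  with relaxation_linear_combination[OF assms(3,4) C1 C1' C2 C2' FN P Q Q'] show ?thesis
    unfolding u_def v_def by simp
qed

theorem mainTheorem15:
  fixes f :: "'a::metric_space \<Rightarrow> real" and lam \<tau> :: real
  assumes "uniquely_geodesic TYPE('a)"
    and "two_uniformly_convex TYPE('a)"
    and "boundedly_compact TYPE('a)"
    and "geod_convex_fun f" and "lsc f"
    and "lam > 0" and "0 < \<tau>" and "\<tau> \<le> 1/2"
  shows "\<forall>x y. (dist (relaxed_prox f lam \<tau> x) (relaxed_prox f lam \<tau> y))\<^sup>2
     \<le> (dist x y)\<^sup>2 - \<tau> / (1 - \<tau>) * psi22 x y (relaxed_prox f lam \<tau> x) (relaxed_prox f lam \<tau> y)"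
proof (intro allI)
  fix x y :: 'a
  have "0 < 1 - \<tau>"
    using assms(8) by simp
  moreover have "(1 - \<tau>) * (dist (relaxed_prox f lam \<tau> x) (relaxed_prox f lam \<tau> y))\<^sup>2
      \<le> (1 - \<tau>) * (dist x y)\<^sup>2 - \<tau> * psi22 x y (relaxed_prox f lam \<tau> x) (relaxed_prox f lam \<tau> y)"
    unfolding relaxed_prox_def
    using relaxation_alpha_firmly_nonexpansive[OF assms(1,2) _ assms(8) prox2_firmly_nonexpansive[OF assms(1-6)]]
      assms(7) by simp
  ultimately show "(dist (relaxed_prox f lam \<tau> x) (relaxed_prox f lam \<tau> y))\<^sup>2
      \<le> (dist x y)\<^sup>2 - \<tau> / (1 - \<tau>) * psi22 x y (relaxed_prox f lam \<tau> x) (relaxed_prox f lam \<tau> y)"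
    by (simp add: field_simps)
qed

end
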